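(* Let $G=(V,E)$ be any graph (finite or infinite) and let $F$ and $F'$ be two partitions of $V$ each consisting of maximal ``strong'' partitive sets of $G$. Then $F=F'$.
   Context: A graph $G=(V,E)$ has vertex set $V$ and edge set $E\subseteq V^2$. A set $X\subseteq V$ is a partitive set of $G$ if for all $a,b\in X$ and $c\in V\setminus X$: $(a,c)\in E\Leftrightarrow(b,c)\in E$ and $(c,a)\in E\Leftrightarrow(c,b)\in E$; $I(G)$ is the class of partitive sets. A ``strong'' partitive set is an $X\in I(G)$ such that for every $Y\in I(G)$ with $X\cap Y\neq\emptyset$, $X\subseteq Y$ or $Y\subseteq X$; $I_F(G)$ is their class. A maximal ``strong'' partitive set is an element of $I_F(G)\setminus\{V\}$ maximal for inclusion in $I_F(G)\setminus\{V\}$. *)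

theory Defs
  imports Main "HOL-Library.Disjoint_Sets"
begin

text \<open>A graph is a pair (V, E) with E a subset of V x V (directed, loops allowed).\<close>

definition graph :: "'a set \<Rightarrow> ('a \<times> 'a) set \<Rightarrow> bool" where
  "graph V E \<longleftrightarrow> E \<subseteq> V \<times> V"

definition partitive :: "'a set \<Rightarrow> ('a \<times> 'a) set \<Rightarrow> 'a set \<Rightarrow> bool" where
  "partitive V E X \<longleftrightarrow> X \<subseteq> V \<and>
     (\<forall>a\<in>X. \<forall>b\<in>X. \<forall>c\<in>V - X.
        ((a, c) \<in> E \<longleftrightarrow> (b, c) \<in> E) \<and> ((c, a) \<in> E \<longleftrightarrow> (c, b) \<in> E))"

definition I_G :: "'a set \<Rightarrow> ('a \<times> 'a) set \<Rightarrow> 'a set set" where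
  "I_G V E = {X. partitive V E X}"

definition I_F :: "'a set \<Rightarrow> ('a \<times> 'a) set \<Rightarrow> 'a set set" where
  "I_F V E = {X \<in> I_G V E. \<forall>Y\<in>I_G V E. X \<inter> Y \<noteq> {} \<longrightarrow> X \<subseteq> Y \<or> Y \<subseteq> X}"

definition max_strong :: "'a set \<Rightarrow> ('a \<times> 'a) set \<Rightarrow> 'a set \<Rightarrow> bool" where
  "max_strong V E X \<longleftrightarrow> X \<in> I_F V E - {V} \<and>
     (\<forall>Y\<in>I_F V E - {V}. X \<subseteq> Y \<longrightarrow> Y = X)"

end

theory Submission
  imports Defs
begin

text \<open>A strong partitive set is comparable with every partitive set it meets, so two
  maximal strong partitive sets that meet are comparable and hence equal. Every block of one
  partition therefore coincides with the block of the other partition that meets it.\<close>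

lemma max_strong_eq_if_inter_nonempty:
  assumes "max_strong V E X" and "max_strong V E Y" and "X \<inter> Y \<noteq> {}"
  shows "X = Y"
proof -
  have "X \<subseteq> Y \<or> Y \<subseteq> X"
    using assms unfolding max_strong_def I_F_def by blast
  then show "X = Y"
    using assms(1,2) unfolding max_strong_def by blast
qed

lemma partition_on_subset_if_meeting_blocks_eq:
  assumes P: "partition_on A P" and Q: "partition_on A Q"
    and meet_eq: "\<And>X Y. X \<in> P \<Longrightarrow> Y \<in> Q \<Longrightarrow> X \<inter> Y \<noteq> {} \<Longrightarrow> X = Y"
  shows "P \<subseteq> Q"
proof
  fix X assume "X \<in> P"
  then have "X \<noteq> {}" using partition_onD3[OF P] by auto
  then obtain x where "x \<in> X" by blast
  with \<open>X \<in> P\<close> have "x \<in> A" using partition_onD1[OF P] by blast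
  then obtain Y where "Y \<in> Q" "x \<in> Y"
    using partition_onD1[OF Q] by blast
  with \<open>X \<in> P\<close> \<open>x \<in> X\<close> have "X = Y"
    using meet_eq by blast
  with \<open>Y \<in> Q\<close> show "X \<in> Q" by simp
qed

theorem lemma4p2:
  fixes V :: "'a set" and E :: "('a \<times> 'a) set" and F F' :: "'a set set"
  assumes "graph V E"
    and "partition_on V F" and "\<forall>X\<in>F. max_strong V E X"
    and "partition_on V F'" and "\<forall>X\<in>F'. max_strong V E X"
  shows "F = F'"
proof
  show "F \<subseteq> F'"
    using assms(2,4) by (rule partition_on_subset_if_meeting_blocks_eq)
      (use assms(3,5) max_strong_eq_if_inter_nonempty in blast)
  show "F' \<subseteq> F"
    using assms(4,2) by (rule partition_on_subset_if_meeting_blocks_eq)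
      (use assms(3,5) max_strong_eq_if_inter_nonempty in blast)
qed

end
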